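(* Let ${\bm{x}}_i^m\in\mathbb{R}^d$ ($m\in[M]$, $i\in[n]$) satisfy $\|{\bm{x}}_i^m\|\le1$ and be linearly separable with maximum margin $\gamma=\max_{\|{\bm{w}}\|=1}\min_{m,i}\langle{\bm{w}},{\bm{x}}_i^m\rangle>0$. Let $\ell(z)=\log(1+e^{-z})$, $F_m({\bm{w}})=\frac1n\sum_i\ell(\langle{\bm{w}},{\bm{x}}_i^m\rangle)$, $F=\frac1M\sum_mF_m$. Run Local GD with any ${\bm{w}}_0$, $\eta>0$, $K\in\mathbb{N}$: ${\bm{w}}_{r,0}^m={\bm{w}}_r$, ${\bm{w}}_{r,k+1}^m={\bm{w}}_{r,k}^m-\eta\nabla F_m({\bm{w}}_{r,k}^m)$ ($k=0,\dots,K-1$), ${\bm{w}}_{r+1}=\frac1M\sum_m{\bm{w}}_{r,K}^m$. Define $${\bm{b}}_r=\frac1{MK}\sum_{m=1}^M\sum_{k=0}^{K-1}\big(\nabla F_m({\bm{w}}_{r,k}^m)-\nabla F_m({\bm{w}}_r)\big).$$ If $F({\bm{w}}_r)\le\gamma/(70\eta KM)$, then $\|{\bm{b}}_r\|\le\frac15\|\nabla F({\bm{w}}_r)\|$.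
   Context: Linear separability means there is ${\bm{w}}$ with $\langle{\bm{w}},{\bm{x}}_i^m\rangle>0$ for all $m,i$ (labels absorbed into data). Note ${\bm{w}}_{r+1}-{\bm{w}}_r=-\eta K(\nabla F({\bm{w}}_r)+{\bm{b}}_r)$. *)

theory Defs
  imports "HOL-Analysis.Analysis"
begin

definition grad :: "('a::euclidean_space \<Rightarrow> real) \<Rightarrow> 'a \<Rightarrow> 'a" where
  "grad f w = (THE D. GDERIV f w :> D)"

definition logloss :: "real \<Rightarrow> real" where
  "logloss z = ln (1 + exp (- z))"

definition Floc :: "nat \<Rightarrow> (nat \<Rightarrow> nat \<Rightarrow> 'a::euclidean_space) \<Rightarrow> nat \<Rightarrow> 'a \<Rightarrow> real" where
  "Floc n x m w = (1 / real n) * (\<Sum>i<n. logloss (inner w (x m i)))"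

definition Fglob :: "nat \<Rightarrow> nat \<Rightarrow> (nat \<Rightarrow> nat \<Rightarrow> 'a::euclidean_space) \<Rightarrow> 'a \<Rightarrow> real" where
  "Fglob M n x w = (1 / real M) * (\<Sum>m<M. Floc n x m w)"

definition max_margin :: "nat \<Rightarrow> nat \<Rightarrow> (nat \<Rightarrow> nat \<Rightarrow> 'a::euclidean_space) \<Rightarrow> real" where
  "max_margin M n x =
     (SUP w \<in> {w. norm w = 1}. Min {inner w (x m i) | m i. m < M \<and> i < n})"

text \<open>Local iterates: local_iter n x \<eta> m w k = w^m_{r,k} when started from w = w_r.\<close>
fun local_iter :: "nat \<Rightarrow> (nat \<Rightarrow> nat \<Rightarrow> 'a::euclidean_space) \<Rightarrow> real \<Rightarrow> nat \<Rightarrow> 'a \<Rightarrow> nat \<Rightarrow> 'a" where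
  "local_iter n x \<eta> m w 0 = w"
| "local_iter n x \<eta> m w (Suc k) =
     local_iter n x \<eta> m w k - \<eta> *\<^sub>R grad (Floc n x m) (local_iter n x \<eta> m w k)"

fun localGD :: "nat \<Rightarrow> nat \<Rightarrow> (nat \<Rightarrow> nat \<Rightarrow> 'a::euclidean_space) \<Rightarrow> real \<Rightarrow> nat \<Rightarrow> 'a \<Rightarrow> nat \<Rightarrow> 'a" where
  "localGD M n x \<eta> K w0 0 = w0"
| "localGD M n x \<eta> K w0 (Suc r) =
     (1 / real M) *\<^sub>R (\<Sum>m<M. local_iter n x \<eta> m (localGD M n x \<eta> K w0 r) K)"

definition bias :: "nat \<Rightarrow> nat \<Rightarrow> (nat \<Rightarrow> nat \<Rightarrow> 'a::euclidean_space) \<Rightarrow> real \<Rightarrow> nat \<Rightarrow> 'a \<Rightarrow> 'a" where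
  "bias M n x \<eta> K w =
     (1 / (real M * real K)) *\<^sub>R
       (\<Sum>m<M. \<Sum>k<K. grad (Floc n x m) (local_iter n x \<eta> m w k) - grad (Floc n x m) w)"

end

theory Submission
  imports Defs
begin

text \<open>
  Write \<open>\<sigma>(z) = 1 / (1 + e\<^sup>z) = - logloss' z\<close> and \<open>G\<^sub>m(u) = (1/n) \<Sum>\<^sub>i \<sigma>(\<langle>u, x\<^sub>i\<^sup>m\<rangle>)\<close>.
  Moving the argument of \<open>\<sigma>\<close> by \<open>\<Delta>\<close> changes it by at most a factor \<open>e\<^bsup>|\<Delta>|\<^esup>\<close>; as all data
  have norm at most 1, this gives \<open>\<parallel>\<nabla>F\<^sub>m(u)\<parallel> \<le> G\<^sub>m(u)\<close> and
  \<open>\<parallel>\<nabla>F\<^sub>m(u) - \<nabla>F\<^sub>m(w)\<parallel> \<le> (e\<^bsup>\<parallel>u - w\<parallel>\<^esup> - 1) G\<^sub>m(w)\<close>.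
  Since \<open>\<sigma> \<le> logloss\<close>, the hypothesis on \<open>F(w\<^sub>r)\<close> forces \<open>\<eta> K G\<^sub>m(w\<^sub>r) \<le> \<gamma>/70\<close>, so the \<open>K\<close> local
  steps stay within distance \<open>\<gamma>/35\<close> of \<open>w\<^sub>r\<close> and every summand of \<open>b\<^sub>r\<close> is at most
  \<open>(2\<gamma>/35) G\<^sub>m(w\<^sub>r)\<close>. Testing \<open>\<nabla>F(w\<^sub>r)\<close> against a unit direction of margin close to \<open>\<gamma>\<close> gives
  \<open>\<gamma> (1/M) \<Sum>\<^sub>m G\<^sub>m(w\<^sub>r) \<le> \<parallel>\<nabla>F(w\<^sub>r)\<parallel>\<close>, hence \<open>\<parallel>b\<^sub>r\<parallel> \<le> (2/35) \<parallel>\<nabla>F(w\<^sub>r)\<parallel>\<close>.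
\<close>

definition neg_logloss_deriv :: "real \<Rightarrow> real" where
  "neg_logloss_deriv z = 1 / (1 + exp z)"

lemma neg_logloss_deriv_pos: "neg_logloss_deriv z > 0"
  unfolding neg_logloss_deriv_def by (simp add: add_pos_pos)

lemma DERIV_logloss: "DERIV logloss z :> - neg_logloss_deriv z"
proof -
  have "DERIV (\<lambda>z. ln (1 + exp (- z))) z :> (1 / (1 + exp (-z))) * (exp (-z) * (-1))"
    by (auto intro!: derivative_eq_intros simp: add_pos_pos)
  moreover have "(1 / (1 + exp (-z))) * (exp (-z) * (-1)) = - neg_logloss_deriv z"
    unfolding neg_logloss_deriv_def by (simp add: field_simps exp_minus add_pos_pos)
  ultimately show ?thesis unfolding logloss_def[abs_def] by simp
qed

lemma neg_logloss_deriv_le_exp_dist: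
  "neg_logloss_deriv b \<le> exp \<bar>b - a\<bar> * neg_logloss_deriv a"
proof -
  have "1 + exp a \<le> exp \<bar>b - a\<bar> * (1 + exp b)"
  proof (cases "a \<le> b")
    case True
    then have "exp \<bar>b - a\<bar> * exp b = exp (b - a + b)" by (simp flip: exp_add)
    also have "\<dots> \<ge> exp a" using True by simp
    finally have "1 + exp a \<le> exp \<bar>b - a\<bar> + exp \<bar>b - a\<bar> * exp b"
      by (intro add_mono) simp_all
    then show ?thesis by (simp add: distrib_left)
  next
    case False
    then have "exp \<bar>b - a\<bar> * exp b = exp a" by (simp flip: exp_add)
    then show ?thesis by (simp add: distrib_left)
  qed
  then show ?thesis unfolding neg_logloss_deriv_def by (simp add: field_simps add_pos_pos)
qed

lemma neg_logloss_deriv_diff_le: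
  "\<bar>neg_logloss_deriv b - neg_logloss_deriv a\<bar> \<le> (exp \<bar>b - a\<bar> - 1) * neg_logloss_deriv a"
proof (cases "a \<le> b")
  case True
  let ?d = "\<bar>b - a\<bar>"
  have decr: "neg_logloss_deriv b \<le> neg_logloss_deriv a"
    using True unfolding neg_logloss_deriv_def by (simp add: frac_le add_pos_pos)
  have "neg_logloss_deriv a \<le> exp ?d * neg_logloss_deriv b"
    using neg_logloss_deriv_le_exp_dist[of a b] by (simp add: abs_minus_commute)
  then have "exp (- ?d) * neg_logloss_deriv a \<le> neg_logloss_deriv b"
    by (simp add: exp_minus field_simps)
  moreover have "1 - exp (- ?d) \<le> exp ?d - 1"
    using exp_ge_add_one_self[of "- ?d"] exp_ge_add_one_self[of ?d] by linarith
  then have "(1 - exp (- ?d)) * neg_logloss_deriv a \<le> (exp ?d - 1) * neg_logloss_deriv a"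
    using neg_logloss_deriv_pos[of a] by (intro mult_right_mono) auto
  ultimately show ?thesis using decr by (simp add: algebra_simps)
next
  case False
  then have "neg_logloss_deriv a \<le> neg_logloss_deriv b"
    unfolding neg_logloss_deriv_def by (simp add: frac_le add_pos_pos)
  then show ?thesis using neg_logloss_deriv_le_exp_dist[of b a] by (simp add: algebra_simps)
qed

text \<open>This is \<open>ln t \<le> t - 1\<close> at \<open>t = 1 / (1 + e\<^sup>-\<^sup>z)\<close>.\<close>
lemma neg_logloss_deriv_le_logloss: "neg_logloss_deriv z \<le> logloss z"
proof -
  have pos: "1 + exp (-z) > 0" "1 + exp z > 0" by (simp_all add: add_pos_pos)
  have "ln (1 / (1 + exp (-z))) \<le> 1 / (1 + exp (-z)) - 1"
    using pos by (intro ln_le_minus_one) simp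
  moreover have "ln (1 / (1 + exp (-z))) = - logloss z"
    unfolding logloss_def using pos by (simp add: ln_div)
  moreover have "1 / (1 + exp (-z)) - 1 = - neg_logloss_deriv z"
    unfolding neg_logloss_deriv_def exp_minus using pos by (simp add: field_simps)
  ultimately show ?thesis by simp
qed

lemma GDERIV_unique: "GDERIV f w :> D1 \<Longrightarrow> GDERIV f w :> D2 \<Longrightarrow> D1 = D2"
proof -
  assume "GDERIV f w :> D1" "GDERIV f w :> D2"
  then have "(\<lambda>h. inner h D1) = (\<lambda>h. inner h D2)"
    unfolding gderiv_def by (rule has_derivative_unique)
  then have "inner (D1 - D2) D1 = inner (D1 - D2) D2" by metis
  then have "inner (D1 - D2) (D1 - D2) = 0" by (simp add: inner_diff_right)
  then show ?thesis by simp
qed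

lemma grad_eqI: "GDERIV f w :> D \<Longrightarrow> grad f w = D"
  unfolding grad_def using GDERIV_unique by blast

lemma GDERIV_sum:
  "finite A \<Longrightarrow> (\<And>i. i \<in> A \<Longrightarrow> GDERIV (f i) w :> D i) \<Longrightarrow>
     GDERIV (\<lambda>u. \<Sum>i\<in>A. f i u) w :> (\<Sum>i\<in>A. D i)"
  unfolding gderiv_def inner_sum_right by (rule has_derivative_sum)

lemma GDERIV_cmult: "GDERIV f w :> D \<Longrightarrow> GDERIV (\<lambda>u. c * f u) w :> c *\<^sub>R D"
  unfolding gderiv_def by (auto intro!: derivative_eq_intros)

lemma GDERIV_Floc:
  "GDERIV (Floc n x m) u :>
     (1 / real n) *\<^sub>R (\<Sum>i<n. (- neg_logloss_deriv (inner u (x m i))) *\<^sub>R x m i)"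
proof -
  have "GDERIV (\<lambda>u. inner u (x m i)) u :> x m i" for i
    unfolding gderiv_def
    by (rule bounded_linear.has_derivative[OF bounded_linear_inner_left has_derivative_ident])
  then have "GDERIV (\<lambda>u. logloss (inner u (x m i))) u
      :> (- neg_logloss_deriv (inner u (x m i))) *\<^sub>R x m i" for i
    by (rule GDERIV_DERIV_compose[OF _ DERIV_logloss])
  then show ?thesis unfolding Floc_def[abs_def]
    by (intro GDERIV_cmult GDERIV_sum) auto
qed

lemma grad_Floc:
  "grad (Floc n x m) u = (1 / real n) *\<^sub>R (\<Sum>i<n. (- neg_logloss_deriv (inner u (x m i))) *\<^sub>R x m i)"
  by (rule grad_eqI[OF GDERIV_Floc])

lemma grad_Fglob: "grad (Fglob M n x) u = (1 / real M) *\<^sub>R (\<Sum>m<M. grad (Floc n x m) u)"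
  unfolding grad_Floc Fglob_def[abs_def]
  by (intro grad_eqI GDERIV_cmult GDERIV_sum GDERIV_Floc) auto

definition Gloc :: "nat \<Rightarrow> (nat \<Rightarrow> nat \<Rightarrow> 'a::euclidean_space) \<Rightarrow> nat \<Rightarrow> 'a \<Rightarrow> real" where
  "Gloc n x m u = (1 / real n) * (\<Sum>i<n. neg_logloss_deriv (inner u (x m i)))"

definition Gglob :: "nat \<Rightarrow> nat \<Rightarrow> (nat \<Rightarrow> nat \<Rightarrow> 'a::euclidean_space) \<Rightarrow> 'a \<Rightarrow> real" where
  "Gglob M n x u = (1 / real M) * (\<Sum>m<M. Gloc n x m u)"

lemma Gloc_nonneg: "Gloc n x m u \<ge> 0"
  unfolding Gloc_def by (simp add: sum_nonneg less_imp_le[OF neg_logloss_deriv_pos])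

lemma Gglob_pos:
  assumes "M \<ge> 1" "n \<ge> 1"
  shows "Gglob M n x u > 0"
proof -
  have "Gloc n x m u > 0" for m
    unfolding Gloc_def using assms(2) neg_logloss_deriv_pos
    by (intro mult_pos_pos sum_pos) (auto simp: lessThan_empty_iff)
  then show ?thesis
    unfolding Gglob_def using assms(1) by (intro mult_pos_pos sum_pos) (auto simp: lessThan_empty_iff)
qed

lemma Gloc_le_Floc: "Gloc n x m u \<le> Floc n x m u"
  unfolding Gloc_def Floc_def using neg_logloss_deriv_le_logloss
  by (intro mult_left_mono sum_mono) auto

lemma Floc_nonneg: "Floc n x m u \<ge> 0"
  using Gloc_nonneg Gloc_le_Floc by (rule order_trans)

lemma Floc_le_Fglob:
  assumes "m < M"
  shows "Floc n x m u \<le> real M * Fglob M n x u"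
proof -
  have "Floc n x m u \<le> (\<Sum>m<M. Floc n x m u)"
    using assms Floc_nonneg by (intro member_le_sum) auto
  then show ?thesis using assms unfolding Fglob_def by simp
qed

lemma inner_dist_le:
  fixes a :: "'a::real_inner"
  assumes "norm (u - w) \<le> d" "norm a \<le> 1"
  shows "\<bar>inner u a - inner w a\<bar> \<le> d"
proof -
  have "\<bar>inner (u - w) a\<bar> \<le> norm (u - w) * norm a" by (rule Cauchy_Schwarz_ineq2)
  also have "\<dots> \<le> norm (u - w)" using assms(2) by (simp add: mult_left_le)
  finally show ?thesis using assms(1) by (simp add: inner_diff_left)
qed

lemma norm_grad_Floc_le_Gloc:
  assumes "\<And>i. i < n \<Longrightarrow> norm (x m i) \<le> 1"
  shows "norm (grad (Floc n x m) u) \<le> Gloc n x m u"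
proof -
  have "norm (\<Sum>i<n. (- neg_logloss_deriv (inner u (x m i))) *\<^sub>R x m i)
      \<le> (\<Sum>i<n. norm ((- neg_logloss_deriv (inner u (x m i))) *\<^sub>R x m i))"
    by (rule norm_sum)
  also have "\<dots> \<le> (\<Sum>i<n. neg_logloss_deriv (inner u (x m i)))"
    using assms neg_logloss_deriv_pos by (intro sum_mono) (simp add: abs_of_pos mult_left_le)
  finally show ?thesis unfolding grad_Floc Gloc_def by (simp add: divide_simps)
qed

lemma Gloc_le_exp_dist:
  assumes "\<And>i. i < n \<Longrightarrow> norm (x m i) \<le> 1" "norm (u - w) \<le> d"
  shows "Gloc n x m u \<le> exp d * Gloc n x m w"
proof -
  have "neg_logloss_deriv (inner u (x m i)) \<le> exp d * neg_logloss_deriv (inner w (x m i))"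
    if "i < n" for i
  proof -
    have "exp \<bar>inner u (x m i) - inner w (x m i)\<bar> \<le> exp d"
      using inner_dist_le[OF assms(2) assms(1)[OF that]] by simp
    then show ?thesis
      using neg_logloss_deriv_le_exp_dist[of "inner u (x m i)" "inner w (x m i)"]
        neg_logloss_deriv_pos[of "inner w (x m i)"]
      by (meson mult_right_mono less_imp_le order_trans)
  qed
  then have "(\<Sum>i<n. neg_logloss_deriv (inner u (x m i)))
      \<le> exp d * (\<Sum>i<n. neg_logloss_deriv (inner w (x m i)))"
    unfolding sum_distrib_left by (intro sum_mono) simp
  then have "(1 / real n) * (\<Sum>i<n. neg_logloss_deriv (inner u (x m i)))
      \<le> (1 / real n) * (exp d * (\<Sum>i<n. neg_logloss_deriv (inner w (x m i))))"
    by (intro mult_left_mono) auto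
  then show ?thesis unfolding Gloc_def by (simp only: ac_simps)
qed

lemma norm_grad_Floc_diff_le:
  assumes "\<And>i. i < n \<Longrightarrow> norm (x m i) \<le> 1" "norm (u - w) \<le> d"
  shows "norm (grad (Floc n x m) u - grad (Floc n x m) w) \<le> (exp d - 1) * Gloc n x m w"
proof -
  let ?\<sigma> = "\<lambda>v i. neg_logloss_deriv (inner v (x m i))"
  have term_le: "norm ((?\<sigma> w i - ?\<sigma> u i) *\<^sub>R x m i) \<le> (exp d - 1) * ?\<sigma> w i" if "i < n" for i
  proof -
    have "exp \<bar>inner u (x m i) - inner w (x m i)\<bar> - 1 \<le> exp d - 1"
      using inner_dist_le[OF assms(2) assms(1)[OF that]] by simp
    then have "\<bar>?\<sigma> u i - ?\<sigma> w i\<bar> \<le> (exp d - 1) * ?\<sigma> w i"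
      using neg_logloss_deriv_diff_le[of "inner u (x m i)" "inner w (x m i)"]
        neg_logloss_deriv_pos[of "inner w (x m i)"]
      by (meson mult_right_mono less_imp_le order_trans)
    moreover have "norm ((?\<sigma> w i - ?\<sigma> u i) *\<^sub>R x m i) \<le> \<bar>?\<sigma> w i - ?\<sigma> u i\<bar>"
      using assms(1)[OF that] by (simp add: mult_left_le)
    ultimately show ?thesis by linarith
  qed
  have "grad (Floc n x m) u - grad (Floc n x m) w
     = (1 / real n) *\<^sub>R (\<Sum>i<n. (?\<sigma> w i - ?\<sigma> u i) *\<^sub>R x m i)"
    unfolding grad_Floc
    by (simp add: scaleR_diff_right[symmetric] sum_subtractf[symmetric] scaleR_diff_left)
  then have "norm (grad (Floc n x m) u - grad (Floc n x m) w)
      = (1 / real n) * norm (\<Sum>i<n. (?\<sigma> w i - ?\<sigma> u i) *\<^sub>R x m i)"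
    by simp
  also have "\<dots> \<le> (1 / real n) * ((exp d - 1) * (\<Sum>i<n. ?\<sigma> w i))"
    unfolding sum_distrib_left[of "exp d - 1"] using term_le
    by (intro mult_left_mono order_trans[OF norm_sum] sum_mono) auto
  also have "\<dots> = (exp d - 1) * Gloc n x m w"
    unfolding Gloc_def by (rule mult.left_commute)
  finally show ?thesis .
qed

text \<open>Each local step has length at most \<open>\<eta> G\<^sub>m(u) \<le> 2 \<eta> G\<^sub>m(w)\<close> as long as the iterate \<open>u\<close>
  stays within distance \<open>1/2\<close> of \<open>w\<close>, because \<open>e\<^bsup>1/2\<^esup> \<le> 2\<close>.\<close>
lemma local_iter_drift:
  assumes data: "\<And>i. i < n \<Longrightarrow> norm (x m i) \<le> 1" and "\<eta> \<ge> 0"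
    and budget: "2 * \<eta> * real K * Gloc n x m w \<le> 1/2"
  shows "k \<le> K \<Longrightarrow> norm (local_iter n x \<eta> m w k - w) \<le> 2 * \<eta> * real k * Gloc n x m w"
proof (induction k)
  case 0
  then show ?case by simp
next
  case (Suc k)
  let ?u = "local_iter n x \<eta> m w k"
  have IH: "norm (?u - w) \<le> 2 * \<eta> * real k * Gloc n x m w" using Suc by simp
  also have "\<dots> \<le> 2 * \<eta> * real K * Gloc n x m w"
    using Suc.prems \<open>\<eta> \<ge> 0\<close> Gloc_nonneg by (intro mult_right_mono mult_left_mono) auto
  finally have "Gloc n x m ?u \<le> exp (1/2) * Gloc n x m w"
    using Gloc_le_exp_dist[where x = x and m = m, OF data] budget by fastforce
  also have "\<dots> \<le> 2 * Gloc n x m w"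
    using real_exp_bound_lemma[of "1/2"] Gloc_nonneg by (intro mult_right_mono) auto
  finally have step: "norm (\<eta> *\<^sub>R grad (Floc n x m) ?u) \<le> \<eta> * (2 * Gloc n x m w)"
    using norm_grad_Floc_le_Gloc[where x = x and m = m, OF data] \<open>\<eta> \<ge> 0\<close>
    by (auto intro: mult_left_mono order_trans)
  have "norm (local_iter n x \<eta> m w (Suc k) - w) = norm ((?u - w) - \<eta> *\<^sub>R grad (Floc n x m) ?u)"
    by (simp add: algebra_simps)
  also have "\<dots> \<le> norm (?u - w) + norm (\<eta> *\<^sub>R grad (Floc n x m) ?u)"
    by (rule norm_triangle_ineq4)
  also have "\<dots> \<le> 2 * \<eta> * real k * Gloc n x m w + \<eta> * (2 * Gloc n x m w)"
    using IH step by (rule add_mono)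
  also have "\<dots> = 2 * \<eta> * real (Suc k) * Gloc n x m w"
    by (simp add: algebra_simps)
  finally show ?case .
qed

lemma norm_grad_local_iter_diff_le:
  assumes data: "\<And>i. i < n \<Longrightarrow> norm (x m i) \<le> 1" and "\<eta> \<ge> 0" and "k \<le> K"
    and budget: "2 * \<eta> * real K * Gloc n x m w \<le> d" and "d \<le> 1/2"
  shows "norm (grad (Floc n x m) (local_iter n x \<eta> m w k) - grad (Floc n x m) w)
           \<le> 2 * d * Gloc n x m w"
proof -
  have "0 \<le> 2 * \<eta> * real K * Gloc n x m w"
    using \<open>\<eta> \<ge> 0\<close> Gloc_nonneg[of n x m w] by simp
  then have "0 \<le> d" using budget by linarith
  have "norm (local_iter n x \<eta> m w k - w) \<le> 2 * \<eta> * real k * Gloc n x m w"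
    using data \<open>\<eta> \<ge> 0\<close> \<open>k \<le> K\<close> budget \<open>d \<le> 1/2\<close>
    by (intro local_iter_drift[where K = K]) auto
  also have "\<dots> \<le> 2 * \<eta> * real K * Gloc n x m w"
    using assms Gloc_nonneg by (intro mult_right_mono mult_left_mono) auto
  finally have "norm (local_iter n x \<eta> m w k - w) \<le> d"
    using budget by linarith
  then have "norm (grad (Floc n x m) (local_iter n x \<eta> m w k) - grad (Floc n x m) w)
      \<le> (exp d - 1) * Gloc n x m w"
    using norm_grad_Floc_diff_le[where x = x and m = m] data by blast
  also have "\<dots> \<le> 2 * d * Gloc n x m w"
    using real_exp_bound_lemma[of d] \<open>0 \<le> d\<close> \<open>d \<le> 1/2\<close> Gloc_nonneg[of n x m w]
    by (intro mult_right_mono) auto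
  finally show ?thesis .
qed

lemma norm_bias_le:
  assumes "K \<ge> 1"
    and "\<And>m k. m < M \<Longrightarrow> k < K \<Longrightarrow>
      norm (grad (Floc n x m) (local_iter n x \<eta> m w k) - grad (Floc n x m) w) \<le> c * Gloc n x m w"
  shows "norm (bias M n x \<eta> K w) \<le> c * Gglob M n x w"
proof -
  have "norm (\<Sum>m<M. \<Sum>k<K. grad (Floc n x m) (local_iter n x \<eta> m w k) - grad (Floc n x m) w)
      \<le> (\<Sum>m<M. \<Sum>k<K. c * Gloc n x m w)"
    using assms(2) by (intro order_trans[OF norm_sum] sum_mono order_trans[OF norm_sum]) auto
  also have "\<dots> = real K * real M * (c * Gglob M n x w)"
    unfolding Gglob_def by (cases "M = 0") (simp_all add: sum_distrib_left)
  finally have sum_le: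
    "norm (\<Sum>m<M. \<Sum>k<K. grad (Floc n x m) (local_iter n x \<eta> m w k) - grad (Floc n x m) w)
      \<le> real K * real M * (c * Gglob M n x w)" .
  have "norm (bias M n x \<eta> K w)
      = norm (\<Sum>m<M. \<Sum>k<K. grad (Floc n x m) (local_iter n x \<eta> m w k) - grad (Floc n x m) w)
        / (real M * real K)"
    unfolding bias_def by simp
  also have "\<dots> \<le> real K * real M * (c * Gglob M n x w) / (real M * real K)"
    using sum_le by (rule divide_right_mono) simp
  also have "\<dots> = c * Gglob M n x w"
    using assms(1) by (cases "M = 0") (simp_all add: Gglob_def)
  finally show ?thesis .
qed

lemma drift_budget_le:
  assumes "m < M" "K \<ge> 1" "\<eta> > 0" and "Fglob M n x w \<le> \<gamma> / (70 * \<eta> * real K * real M)"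
  shows "2 * \<eta> * real K * Gloc n x m w \<le> \<gamma> / 35"
proof -
  have "Gloc n x m w \<le> real M * Fglob M n x w"
    using Gloc_le_Floc Floc_le_Fglob[OF assms(1)] by (rule order_trans)
  also have "\<dots> \<le> real M * (\<gamma> / (70 * \<eta> * real K * real M))"
    using assms(4) by (intro mult_left_mono) auto
  finally have "2 * \<eta> * real K * Gloc n x m w
      \<le> 2 * \<eta> * real K * (real M * (\<gamma> / (70 * \<eta> * real K * real M)))"
    using assms(3) by (intro mult_left_mono) auto
  also have "\<dots> = \<gamma> / 35"
    using assms(1-3) by simp
  finally show ?thesis .
qed

lemma Min_margin_le_inner:
  fixes x :: "nat \<Rightarrow> nat \<Rightarrow> 'a::real_inner"
  assumes "m < M" "i < n"
  shows "Min {inner v (x m i) | m i. m < M \<and> i < n} \<le> inner v (x m i)"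
  using assms by (intro Min_le finite_image_set2) auto

lemma unit_vectors_nonempty: "{v::'a::euclidean_space. norm v = 1} \<noteq> {}"
  using norm_Basis nonempty_Basis by blast

lemma max_margin_le_1:
  assumes "M \<ge> 1" "n \<ge> 1" and "\<And>m i. m < M \<Longrightarrow> i < n \<Longrightarrow> norm (x m i) \<le> 1"
  shows "max_margin M n x \<le> 1"
  unfolding max_margin_def
proof (rule cSUP_least[OF unit_vectors_nonempty])
  fix v :: 'a assume "v \<in> {v. norm v = 1}"
  have "Min {inner v (x m i) | m i. m < M \<and> i < n} \<le> inner v (x 0 0)"
    using assms by (intro Min_margin_le_inner) auto
  also have "\<dots> \<le> norm v * norm (x 0 0)" by (rule norm_cauchy_schwarz)
  also have "\<dots> \<le> 1" using \<open>v \<in> {v. norm v = 1}\<close> assms by simp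
  finally show "Min {inner v (x m i) | m i. m < M \<and> i < n} \<le> 1" .
qed

lemma margin_mult_Gglob_le_norm_grad:
  assumes "norm v = 1" and "\<And>m i. m < M \<Longrightarrow> i < n \<Longrightarrow> c \<le> inner v (x m i)"
  shows "c * Gglob M n x w \<le> norm (grad (Fglob M n x) w)"
proof -
  have per_client: "c * Gloc n x m w \<le> - inner (grad (Floc n x m) w) v" if "m < M" for m
  proof -
    have "c * Gloc n x m w = (1 / real n) * (\<Sum>i<n. neg_logloss_deriv (inner w (x m i)) * c)"
      unfolding Gloc_def by (simp add: sum_distrib_left algebra_simps)
    also have "\<dots> \<le> (1 / real n) * (\<Sum>i<n. neg_logloss_deriv (inner w (x m i)) * inner v (x m i))"
      using assms(2)[OF that] neg_logloss_deriv_pos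
      by (intro mult_left_mono sum_mono) (auto intro!: mult_left_mono less_imp_le)
    also have "\<dots> = - inner (grad (Floc n x m) w) v"
      unfolding grad_Floc by (simp add: inner_sum_left inner_sum_right sum_negf inner_commute)
    finally show ?thesis .
  qed
  have "c * Gglob M n x w = (1 / real M) * (\<Sum>m<M. c * Gloc n x m w)"
    unfolding Gglob_def by (simp add: sum_distrib_left)
  also have "\<dots> \<le> (1 / real M) * (\<Sum>m<M. - inner (grad (Floc n x m) w) v)"
    using per_client by (intro mult_left_mono sum_mono) auto
  also have "\<dots> = - inner (grad (Fglob M n x) w) v"
    unfolding grad_Fglob by (simp add: inner_sum_left sum_negf)
  also have "\<dots> \<le> norm (grad (Fglob M n x) w)"
    using Cauchy_Schwarz_ineq2[of "grad (Fglob M n x) w" v] assms(1) by simp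
  finally show ?thesis .
qed

lemma max_margin_mult_Gglob_le_norm_grad:
  assumes "M \<ge> 1" "n \<ge> 1"
  shows "max_margin M n x * Gglob M n x w \<le> norm (grad (Fglob M n x) w)"
proof -
  have "max_margin M n x \<le> norm (grad (Fglob M n x) w) / Gglob M n x w"
    unfolding max_margin_def
  proof (rule cSUP_least[OF unit_vectors_nonempty])
    fix v :: 'a assume "v \<in> {v. norm v = 1}"
    moreover have "Min {inner v (x m i) | m i. m < M \<and> i < n} \<le> inner v (x m i)"
      if "m < M" "i < n" for m i
      using that by (rule Min_margin_le_inner)
    ultimately have "Min {inner v (x m i) | m i. m < M \<and> i < n} * Gglob M n x w
        \<le> norm (grad (Fglob M n x) w)"
      by (intro margin_mult_Gglob_le_norm_grad) auto
    then show "Min {inner v (x m i) | m i. m < M \<and> i < n}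
        \<le> norm (grad (Fglob M n x) w) / Gglob M n x w"
      using Gglob_pos[OF assms, of x w] by (simp add: le_divide_eq)
  qed
  then show ?thesis using Gglob_pos[OF assms, of x w] by (simp add: le_divide_eq)
qed

theorem lemma4p8:
  fixes x :: "nat \<Rightarrow> nat \<Rightarrow> 'a::euclidean_space"
    and M n K r :: nat and \<eta> :: real and w0 :: 'a
  assumes "M \<ge> 1" and "n \<ge> 1" and "K \<ge> 1"
    and "\<And>m i. m < M \<Longrightarrow> i < n \<Longrightarrow> norm (x m i) \<le> 1"
    and "max_margin M n x > 0"
    and "\<eta> > 0"
    and "Fglob M n x (localGD M n x \<eta> K w0 r)
           \<le> max_margin M n x / (70 * \<eta> * real K * real M)"
  shows "norm (bias M n x \<eta> K (localGD M n x \<eta> K w0 r))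
           \<le> (1/5) * norm (grad (Fglob M n x) (localGD M n x \<eta> K w0 r))"
proof -
  define w where "w = localGD M n x \<eta> K w0 r"
  define \<gamma> where "\<gamma> = max_margin M n x"
  have "\<gamma> \<le> 1" unfolding \<gamma>_def using assms(1,2,4) by (rule max_margin_le_1)
  have budget: "2 * \<eta> * real K * Gloc n x m w \<le> \<gamma> / 35" if "m < M" for m
    using that assms(3,6,7) unfolding w_def \<gamma>_def by (rule drift_budget_le)
  have "norm (grad (Floc n x m) (local_iter n x \<eta> m w k) - grad (Floc n x m) w)
      \<le> 2 * (\<gamma> / 35) * Gloc n x m w" if "m < M" "k < K" for m k
    using assms(4,6) that budget[OF that(1)] \<open>\<gamma> \<le> 1\<close>
    by (intro norm_grad_local_iter_diff_le[where K = K]) auto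
  then have "norm (bias M n x \<eta> K w) \<le> 2 * (\<gamma> / 35) * Gglob M n x w"
    by (rule norm_bias_le[OF assms(3)])
  also have "\<dots> \<le> (2 / 35) * norm (grad (Fglob M n x) w)"
    using max_margin_mult_Gglob_le_norm_grad[OF assms(1,2)] unfolding \<gamma>_def by simp
  also have "\<dots> \<le> (1/5) * norm (grad (Fglob M n x) w)"
    by simp
  finally show ?thesis unfolding w_def by simp
qed

end
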